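(* Let $0\le t_d\le t_f$ be integers and let $f:\mathbb{F}_q^k\to\mathrm{Im}(f)$ be a locally $(2t_f,\lambda)$-bounded function such that there is a total order $\prec$ on $\mathrm{Im}(f)$ for which every set $B_f(u,2t_f)$, $u\in\mathbb{F}_q^k$, is a contiguous block (an interval) with respect to $\prec$. Suppose there exists a systematic $[n,k,2t_d+1]$ linear code over $\mathbb{F}_q$. Then $$r_f(k,t_d,t_f)\le n-k+N(\lambda,2(t_f-t_d)).$$ In particular, for $q=2$ and $\lambda=4$, $r_f(k,t_d,t_f)\le n-k+3(t_f-t_d)$.
   Context: $d(\cdot,\cdot)$ is Hamming distance. $B_f(u,\rho)=\{f(u'):u'\in\mathbb{F}_q^k,\ d(u,u')\le\rho\}$; $f$ is locally $(\rho,\lambda)$-bounded if $|B_f(u,\rho)|\le\lambda$ for all $u$. $N(\lambda,d)$ is the minimum length of a $q$-ary code with $\lambda$ codewords and minimum distance at least $d$ (with $N(\lambda,0)=0$). An $(f,t_d,t_f)$-FCC with redundancy $r$ is a systematic encoding $u\mapsto(u,p_u)\in\mathbb{F}_q^{k+r}$ whose images are at distance $\ge 2t_d+1$ for distinct messages and $\ge 2t_f+1$ for messages with different $f$-values; $r_f(k,t_d,t_f)$ is the minimum such $r$. *)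

theory Defs
  imports Main
begin

definition words :: "nat \<Rightarrow> 'a list set" where
  "words m = {u. length u = m}"

definition hdist :: "'a list \<Rightarrow> 'a list \<Rightarrow> nat" where
  "hdist x y = card {i. i < length x \<and> i < length y \<and> x ! i \<noteq> y ! i}"

definition fball :: "nat \<Rightarrow> ('a list \<Rightarrow> 'b) \<Rightarrow> 'a list \<Rightarrow> nat \<Rightarrow> 'b set" where
  "fball k f u \<rho> = {f u' | u'. u' \<in> words k \<and> hdist u u' \<le> \<rho>}"

definition locally_bounded :: "nat \<Rightarrow> ('a list \<Rightarrow> 'b) \<Rightarrow> nat \<Rightarrow> nat \<Rightarrow> bool" where
  "locally_bounded k f \<rho> lam \<longleftrightarrow> (\<forall>u \<in> words k. card (fball k f u \<rho>) \<le> lam)"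

definition N_code :: "'a itself \<Rightarrow> nat \<Rightarrow> nat \<Rightarrow> nat" where
  "N_code _ lam d = (if d = 0 then 0 else
     (LEAST n. \<exists>C :: 'a list set. C \<subseteq> words n \<and> card C = lam \<and>
        (\<forall>x\<in>C. \<forall>y\<in>C. x \<noteq> y \<longrightarrow> d \<le> hdist x y)))"

text \<open>An (f,t_d,t_f)-FCC with redundancy r: systematic encoding u \<mapsto> (u, p u).\<close>
definition is_FCC :: "nat \<Rightarrow> ('a list \<Rightarrow> 'b) \<Rightarrow> nat \<Rightarrow> nat \<Rightarrow> nat \<Rightarrow> ('a list \<Rightarrow> 'a list) \<Rightarrow> bool" where
  "is_FCC k f td tf r p \<longleftrightarrow>
     (\<forall>u \<in> words k. length (p u) = r) \<and>
     (\<forall>u \<in> words k. \<forall>v \<in> words k. u \<noteq> v \<longrightarrow> 2 * td + 1 \<le> hdist (u @ p u) (v @ p v)) \<and>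
     (\<forall>u \<in> words k. \<forall>v \<in> words k. f u \<noteq> f v \<longrightarrow> 2 * tf + 1 \<le> hdist (u @ p u) (v @ p v))"

definition r_f :: "nat \<Rightarrow> ('a list \<Rightarrow> 'b) \<Rightarrow> nat \<Rightarrow> nat \<Rightarrow> nat" where
  "r_f k f td tf = (LEAST r. \<exists>p. is_FCC k f td tf r p)"

text \<open>Systematic [n,k,d] linear code over the field 'a (minimum distance at least d):
  generator matrix [I_k | P] with P a k x (n-k) matrix.\<close>
definition sys_lin_enc :: "nat \<Rightarrow> nat \<Rightarrow> (nat \<Rightarrow> nat \<Rightarrow> 'a::field) \<Rightarrow> 'a list \<Rightarrow> 'a list" where
  "sys_lin_enc n k P u = u @ map (\<lambda>j. \<Sum>i<k. u ! i * P i j) [0..<n - k]"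

definition exists_systematic_linear_code :: "'a::field itself \<Rightarrow> nat \<Rightarrow> nat \<Rightarrow> nat \<Rightarrow> bool" where
  "exists_systematic_linear_code _ n k d \<longleftrightarrow> k \<le> n \<and>
     (\<exists>P :: nat \<Rightarrow> nat \<Rightarrow> 'a. \<forall>u \<in> words k. \<forall>v \<in> words k. u \<noteq> v \<longrightarrow>
        d \<le> hdist (sys_lin_enc n k P u) (sys_lin_enc n k P v))"

definition balls_are_intervals :: "nat \<Rightarrow> ('a list \<Rightarrow> 'b) \<Rightarrow> nat \<Rightarrow> bool" where
  "balls_are_intervals k f \<rho> \<longleftrightarrow>
     (\<exists>R. linear_order_on (f ` words k) R \<and>
        (\<forall>u \<in> words k. \<forall>a \<in> fball k f u \<rho>. \<forall>c \<in> fball k f u \<rho>. \<forall>b \<in> f ` words k.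
           (a, b) \<in> R \<and> (b, c) \<in> R \<longrightarrow> b \<in> fball k f u \<rho>))"

end

(*
  Append to the systematic [n, k, 2 t_d + 1] encoding of u the codeword number col u of a code
  with lam words and minimum distance 2 (t_f - t_d), where col colours F_q^k with lam colours so
  that words with different f-values at distance at most 2 t_f get different colours. Words
  further apart are already separated by their message parts; close words with different
  f-values gain 2 (t_f - t_d) on top of the 2 t_d + 1 of the linear code.
  Such a colouring exists when the balls are intervals: colour u by the rank of f u in the order
  on Im f, taken mod lam. A ball B_f(u, 2 t_f) is a block of at most lam consecutive values, so
  the ranks inside it are distinct mod lam.
*)

theory Submission
  imports Defs
begin

lemma hdist_Nil [simp]: "hdist [] [] = 0"
  by (simp add: hdist_def)

lemma hdist_Cons_Cons [simp]:
  "hdist (a # xs) (b # ys) = (if a = b then 0 else 1) + hdist xs ys"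
proof -
  let ?D = "\<lambda>xs ys. {i. i < length xs \<and> i < length ys \<and> xs ! i \<noteq> ys ! i}"
  have "?D (a # xs) (b # ys) = (if a = b then {} else {0}) \<union> Suc ` ?D xs ys"
  proof (rule set_eqI)
    fix i
    show "i \<in> ?D (a # xs) (b # ys) \<longleftrightarrow> i \<in> (if a = b then {} else {0}) \<union> Suc ` ?D xs ys"
      by (cases i) auto
  qed
  then show ?thesis
    by (simp add: hdist_def card_image)
qed

lemma hdist_append:
  "length xs = length xs' \<Longrightarrow> hdist (xs @ ys) (xs' @ ys') = hdist xs xs' + hdist ys ys'"
  by (induction xs xs' rule: list_induct2) simp_all

lemma hdist_concat_replicate:
  "length w = length w' \<Longrightarrow>
    hdist (concat (replicate m w)) (concat (replicate m w')) = m * hdist w w'"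
  by (induction m) (simp_all add: hdist_append)

lemma finite_words: "finite (words k :: 'a::finite list set)"
  using finite_lists_length_eq[of "UNIV :: 'a set" k] by (simp add: words_def)

definition is_code :: "nat \<Rightarrow> nat \<Rightarrow> nat \<Rightarrow> 'a list set \<Rightarrow> bool" where
  "is_code n lam d C \<longleftrightarrow>
     C \<subseteq> words n \<and> card C = lam \<and> (\<forall>x\<in>C. \<forall>y\<in>C. x \<noteq> y \<longrightarrow> d \<le> hdist x y)"

lemma N_code_eq_Least:
  "0 < d \<Longrightarrow> N_code TYPE('a) lam d = (LEAST n. \<exists>C :: 'a list set. is_code n lam d C)"
  by (simp add: N_code_def is_code_def)

lemma N_code_le:
  assumes "is_code n lam d (C :: 'a list set)"
  shows "N_code TYPE('a) lam d \<le> n"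
proof (cases "d = 0")
  case False
  then have "N_code TYPE('a) lam d = (LEAST n. \<exists>C :: 'a list set. is_code n lam d C)"
    by (simp add: N_code_eq_Least)
  also have "\<dots> \<le> n"
    by (rule Least_le) (use assms in blast)
  finally show ?thesis .
qed (simp add: N_code_def)

lemma is_code_weaken:
  "is_code n lam d C \<Longrightarrow> d' \<le> d \<Longrightarrow> is_code n lam d' C"
  unfolding is_code_def by (meson order_trans)

lemma is_code_repeat:
  assumes code: "is_code n lam d C" and "0 < m"
  shows "is_code (m * n) lam (m * d) ((\<lambda>w. concat (replicate m w)) ` C)"
  unfolding is_code_def
proof (intro conjI ballI impI)
  let ?rep = "\<lambda>w. concat (replicate m w)"
  have len: "length w = n" if "w \<in> C" for w
    using that code by (auto simp: is_code_def words_def)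
  show "?rep ` C \<subseteq> words (m * n)"
    using len by (auto simp: words_def length_concat sum_list_replicate)
  have "take n (?rep w) = w" if "w \<in> C" for w
    using \<open>0 < m\<close> len[OF that] by (cases m) simp_all
  then have "inj_on ?rep C"
    by (rule inj_on_inverseI)
  then show "card (?rep ` C) = lam"
    using code by (simp add: card_image is_code_def)
  fix x y
  assume "x \<in> ?rep ` C" "y \<in> ?rep ` C" "x \<noteq> y"
  then obtain v w where "v \<in> C" "w \<in> C" "v \<noteq> w" "x = ?rep v" "y = ?rep w"
    by blast
  moreover have "d \<le> hdist v w"
    using code \<open>v \<in> C\<close> \<open>w \<in> C\<close> \<open>v \<noteq> w\<close> by (simp add: is_code_def)
  ultimately show "m * d \<le> hdist x y"
    using len by (simp add: hdist_concat_replicate)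
qed

lemma is_code_unit_vectors:
  "is_code lam lam 2
     ((\<lambda>i. map (\<lambda>j. if j = i then 1 else 0) [0..<lam] :: 'a::zero_neq_one list) ` {..<lam})"
proof -
  let ?e = "\<lambda>i. map (\<lambda>j. if j = i then 1 else 0) [0..<lam] :: 'a list"
  have nth: "?e i ! j = (if j = i then 1 else 0)" if "j < lam" for i j
    using that by simp
  have "hdist (?e i) (?e i') = 2" if "i < lam" "i' < lam" "i \<noteq> i'" for i i'
  proof -
    have "{j. j < length (?e i) \<and> j < length (?e i') \<and> ?e i ! j \<noteq> ?e i' ! j} = {i, i'}"
      using that by (auto simp: nth split: if_splits)
    then show ?thesis
      using that by (simp add: hdist_def)
  qed
  moreover have "inj_on ?e {..<lam}"
  proof (rule inj_onI)
    fix i i'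
    assume "i \<in> {..<lam}" "i' \<in> {..<lam}" and eq: "?e i = ?e i'"
    from eq have "?e i ! i = ?e i' ! i"
      by (rule arg_cong)
    with \<open>i \<in> {..<lam}\<close> show "i = i'"
      by (simp add: nth split: if_splits)
  qed
  ultimately show ?thesis
    by (auto simp: is_code_def words_def card_image)
qed

lemma N_code_attained:
  assumes "0 < d"
  shows "\<exists>C :: 'a::zero_neq_one list set. is_code (N_code TYPE('a) lam d) lam d C"
proof -
  let ?units = "(\<lambda>i. map (\<lambda>j. if j = i then 1 else 0) [0..<lam] :: 'a list) ` {..<lam}"
  have "is_code (d * lam) lam (d * 2) ((\<lambda>w. concat (replicate d w)) ` ?units)"
    by (rule is_code_repeat[OF is_code_unit_vectors assms])
  then have "is_code (d * lam) lam d ((\<lambda>w. concat (replicate d w)) ` ?units)"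
    by (rule is_code_weaken) simp
  then have "\<exists>n C :: 'a list set. is_code n lam d C"
    by blast
  then have "\<exists>C :: 'a list set. is_code (LEAST n. \<exists>C :: 'a list set. is_code n lam d C) lam d C"
    by (rule LeastI_ex)
  then show ?thesis
    using assms by (simp only: N_code_eq_Least)
qed

lemma is_code_enumeration:
  assumes code: "is_code n lam d C"
  shows "\<exists>cw. \<forall>i<lam. cw i \<in> C \<and> (\<forall>j<lam. i \<noteq> j \<longrightarrow> d \<le> hdist (cw i) (cw j))"
proof (cases "lam = 0")
  case False
  with code have "finite C" and "card C = lam"
    by (auto simp: is_code_def intro: card_ge_0_finite)
  then obtain cw where cw: "bij_betw cw {0..<lam} C"
    using ex_bij_betw_nat_finite by blast
  have "cw i \<in> C" if "i < lam" for i
    using cw that by (auto simp: bij_betw_def)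
  moreover have "cw i \<noteq> cw j" if "i < lam" "j < lam" "i \<noteq> j" for i j
    using cw that by (auto simp: bij_betw_def inj_on_eq_iff)
  ultimately show ?thesis
    using code unfolding is_code_def by blast
qed simp

lemma N_code_codebook:
  "\<exists>cw :: nat \<Rightarrow> 'a::zero_neq_one list. \<forall>i<lam.
     length (cw i) = N_code TYPE('a) lam d \<and> (\<forall>j<lam. i \<noteq> j \<longrightarrow> d \<le> hdist (cw i) (cw j))"
proof (cases "d = 0")
  case True
  then show ?thesis
    by (auto simp: N_code_def intro: exI[of _ "\<lambda>_. []"])
next
  case False
  then obtain C :: "'a list set" where C: "is_code (N_code TYPE('a) lam d) lam d C"
    using N_code_attained by blast
  then have "\<forall>w\<in>C. length w = N_code TYPE('a) lam d"
    by (auto simp: is_code_def words_def)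
  with is_code_enumeration[OF C] show ?thesis
    by metis
qed

lemma is_code_even_weight:
  "is_code 3 4 2 {[0, 0, 0], [0, 1, 1], [1, 0, 1], [1, 1, 0 :: 'a::zero_neq_one]}"
  by (simp add: is_code_def words_def)

lemma N_code_four_le: "N_code TYPE('a::zero_neq_one) 4 (2 * m) \<le> 3 * m"
proof (cases "m = 0")
  case False
  then show ?thesis
    using N_code_le[OF is_code_repeat[OF is_code_even_weight, of m]] by (simp add: mult.commute)
qed (simp add: N_code_def)

definition order_rank :: "('b \<times> 'b) set \<Rightarrow> 'b set \<Rightarrow> 'b \<Rightarrow> nat" where
  "order_rank R A x = card {b \<in> A. (b, x) \<in> R}"

lemma order_rank_less:
  assumes "finite A" and "linear_order_on A R" and "c \<in> A" and "(a, c) \<in> R" and "a \<noteq> c"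
  shows "order_rank R A a < order_rank R A c"
proof -
  have "trans R" and "antisym R" and "(c, c) \<in> R"
    using assms(2,3) by (auto simp: order_on_defs refl_on_def)
  then have "{b \<in> A. (b, a) \<in> R} \<subset> {b \<in> A. (b, c) \<in> R}"
    using assms(3-5) by (auto dest: transD antisymD)
  then show ?thesis
    unfolding order_rank_def using \<open>finite A\<close> by (simp add: psubset_card_mono)
qed

lemma order_rank_less_add_interval:
  assumes "finite A" and "linear_order_on A R" and "a \<in> A" and "(a, c) \<in> R"
  shows "order_rank R A c < order_rank R A a + card {b \<in> A. (a, b) \<in> R \<and> (b, c) \<in> R}"
proof -
  let ?La = "{b \<in> A. (b, a) \<in> R}" and ?Lc = "{b \<in> A. (b, c) \<in> R}"
    and ?I = "{b \<in> A. (a, b) \<in> R \<and> (b, c) \<in> R}"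
  have "(a, a) \<in> R" and "total_on A R"
    using assms(2,3) by (auto simp: order_on_defs refl_on_def)
  then have cover: "?Lc \<subseteq> ?La \<union> ?I" and common: "a \<in> ?La \<inter> ?I"
    using assms(3,4) by (auto simp: total_on_def)
  have "card ?Lc \<le> card (?La \<union> ?I)"
    using \<open>finite A\<close> cover by (intro card_mono) simp_all
  moreover have "0 < card (?La \<inter> ?I)"
    using \<open>finite A\<close> common by (subst card_gt_0_iff) auto
  ultimately have "card ?Lc < card (?La \<union> ?I) + card (?La \<inter> ?I)"
    by linarith
  also have "\<dots> = card ?La + card ?I"
    using \<open>finite A\<close> by (intro card_Un_Int[symmetric]) simp_all
  finally show ?thesis
    by (simp add: order_rank_def)
qed

lemma nat_mod_neq_of_less_of_less_add:
  assumes "(a::nat) < c" and "c < a + l"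
  shows "a mod l \<noteq> c mod l"
proof
  assume "a mod l = c mod l"
  then have "l dvd c - a"
    using assms(1) mod_eq_dvd_iff_nat[of a c l] by simp
  moreover have "0 < c - a"
    using assms(1) by simp
  ultimately have "l \<le> c - a"
    by (rule dvd_imp_le)
  with assms show False
    by linarith
qed

lemma order_rank_mod_inj_on_interval:
  assumes "finite A" and lin: "linear_order_on A R" and "S \<subseteq> A" and "card S \<le> lam"
    and interval: "\<And>a b c. a \<in> S \<Longrightarrow> c \<in> S \<Longrightarrow> b \<in> A \<Longrightarrow> (a, b) \<in> R \<Longrightarrow> (b, c) \<in> R \<Longrightarrow> b \<in> S"
  shows "inj_on (\<lambda>x. order_rank R A x mod lam) S"
proof -
  have neq: "order_rank R A a mod lam \<noteq> order_rank R A c mod lam"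
    if "a \<in> S" "c \<in> S" "(a, c) \<in> R" "a \<noteq> c" for a c
  proof -
    have "{b \<in> A. (a, b) \<in> R \<and> (b, c) \<in> R} \<subseteq> S"
      using interval that by blast
    then have "card {b \<in> A. (a, b) \<in> R \<and> (b, c) \<in> R} \<le> card S"
      using \<open>finite A\<close> \<open>S \<subseteq> A\<close> by (intro card_mono) (auto intro: finite_subset)
    moreover have "order_rank R A c < order_rank R A a + card {b \<in> A. (a, b) \<in> R \<and> (b, c) \<in> R}"
      using \<open>S \<subseteq> A\<close> that by (intro order_rank_less_add_interval[OF \<open>finite A\<close> lin]) auto
    ultimately have "order_rank R A c < order_rank R A a + lam"
      using \<open>card S \<le> lam\<close> by linarith
    moreover have "order_rank R A a < order_rank R A c"
      using \<open>S \<subseteq> A\<close> that by (intro order_rank_less[OF \<open>finite A\<close> lin]) auto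
    ultimately show ?thesis
      by (rule nat_mod_neq_of_less_of_less_add[rotated])
  qed
  have "total_on A R"
    using lin by (simp add: order_on_defs)
  show ?thesis
  proof (rule inj_onI, rule ccontr)
    fix a c
    assume "a \<in> S" "c \<in> S" and eq: "order_rank R A a mod lam = order_rank R A c mod lam"
      and "a \<noteq> c"
    then have "(a, c) \<in> R \<or> (c, a) \<in> R"
      using \<open>total_on A R\<close> \<open>S \<subseteq> A\<close> by (auto simp: total_on_def)
    then show False
      using neq[OF \<open>a \<in> S\<close> \<open>c \<in> S\<close>] neq[OF \<open>c \<in> S\<close> \<open>a \<in> S\<close>] eq \<open>a \<noteq> c\<close> by auto
  qed
qed

lemma coloring_of_interval_balls:
  fixes f :: "'a::finite list \<Rightarrow> 'b"
  assumes bounded: "locally_bounded k f \<rho> lam" and intervals: "balls_are_intervals k f \<rho>"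
  shows "\<exists>col. \<forall>u \<in> words k. col u < lam \<and>
           (\<forall>v \<in> words k. f u \<noteq> f v \<and> hdist u v \<le> \<rho> \<longrightarrow> col u \<noteq> col v)"
proof -
  let ?A = "f ` words k"
  obtain R where lin: "linear_order_on ?A R" and interval: "\<forall>u \<in> words k.
      \<forall>a \<in> fball k f u \<rho>. \<forall>c \<in> fball k f u \<rho>. \<forall>b \<in> ?A. (a, b) \<in> R \<and> (b, c) \<in> R \<longrightarrow> b \<in> fball k f u \<rho>"
    using intervals unfolding balls_are_intervals_def by blast
  have "finite ?A"
    using finite_words by blast
  have ball_sub: "fball k f u \<rho> \<subseteq> ?A" for u
    by (auto simp: fball_def)
  have center: "f u \<in> fball k f u \<rho>" if "u \<in> words k" for u
    using that by (auto simp: fball_def hdist_def)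
  have card_ball: "card (fball k f u \<rho>) \<le> lam" if "u \<in> words k" for u
    using bounded that by (simp add: locally_bounded_def)
  have "replicate k undefined \<in> words k"
    by (simp add: words_def)
  moreover have "0 < card (fball k f u \<rho>)" if "u \<in> words k" for u
    using center[OF that] finite_subset[OF ball_sub \<open>finite ?A\<close>] card_gt_0_iff by blast
  ultimately have "0 < lam"
    using card_ball by (meson less_le_trans)
  define col where "col u = order_rank R ?A (f u) mod lam" for u
  have "col u \<noteq> col v"
    if "u \<in> words k" "v \<in> words k" "f u \<noteq> f v" "hdist u v \<le> \<rho>" for u v
  proof -
    have "inj_on (\<lambda>x. order_rank R ?A x mod lam) (fball k f u \<rho>)"
      using \<open>finite ?A\<close> lin ball_sub card_ball[OF that(1)] interval that(1)
      by (intro order_rank_mod_inj_on_interval) blast+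
    moreover have "f v \<in> fball k f u \<rho>"
      using that by (auto simp: fball_def)
    ultimately show ?thesis
      using center[OF that(1)] that(3) by (auto simp: col_def dest: inj_onD)
  qed
  moreover have "col u < lam" for u
    using \<open>0 < lam\<close> by (simp add: col_def)
  ultimately show ?thesis
    by blast
qed

lemma r_f_le: "is_FCC k f td tf r p \<Longrightarrow> r_f k f td tf \<le> r"
  unfolding r_f_def by (rule Least_le) (rule exI)

lemma is_FCC_append_separating_suffix:
  assumes "td \<le> tf"
    and q_len: "\<And>u. u \<in> words k \<Longrightarrow> length (q u) = m"
    and q_dist: "\<And>u v. u \<in> words k \<Longrightarrow> v \<in> words k \<Longrightarrow> u \<noteq> v \<Longrightarrow>
                   2 * td + 1 \<le> hdist (u @ q u) (v @ q v)"
    and s_len: "\<And>u. u \<in> words k \<Longrightarrow> length (s u) = N"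
    and s_dist: "\<And>u v. u \<in> words k \<Longrightarrow> v \<in> words k \<Longrightarrow> f u \<noteq> f v \<Longrightarrow> hdist u v \<le> 2 * tf \<Longrightarrow>
                   2 * (tf - td) \<le> hdist (s u) (s v)"
  shows "is_FCC k f td tf (m + N) (\<lambda>u. q u @ s u)"
proof -
  have split: "hdist (u @ q u @ s u) (v @ q v @ s v) = hdist (u @ q u) (v @ q v) + hdist (s u) (s v)"
    if "u \<in> words k" "v \<in> words k" for u v
    using that q_len hdist_append[of "u @ q u" "v @ q v"] by (simp add: words_def)
  have "2 * tf + 1 \<le> hdist (u @ q u @ s u) (v @ q v @ s v)"
    if u: "u \<in> words k" and v: "v \<in> words k" and "f u \<noteq> f v" for u v
  proof (cases "hdist u v \<le> 2 * tf")
    case True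
    then show ?thesis
      using split[OF u v] q_dist[OF u v] s_dist[OF u v \<open>f u \<noteq> f v\<close>] \<open>f u \<noteq> f v\<close> \<open>td \<le> tf\<close>
      by fastforce
  next
    case False
    moreover have "hdist (u @ q u @ s u) (v @ q v @ s v) = hdist u v + hdist (q u @ s u) (q v @ s v)"
      using u v by (simp add: hdist_append words_def)
    ultimately show ?thesis
      by linarith
  qed
  moreover have "2 * td + 1 \<le> hdist (u @ q u @ s u) (v @ q v @ s v)"
    if "u \<in> words k" "v \<in> words k" "u \<noteq> v" for u v
    using that split q_dist by fastforce
  ultimately show ?thesis
    using q_len s_len by (simp add: is_FCC_def)
qed

lemma r_f_le_of_coloring:
  fixes f :: "'a::field list \<Rightarrow> 'b"
  assumes "td \<le> tf"
    and systematic: "exists_systematic_linear_code TYPE('a) n k (2 * td + 1)"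
    and col_lt: "\<And>u. u \<in> words k \<Longrightarrow> col u < lam"
    and col_sep: "\<And>u v. u \<in> words k \<Longrightarrow> v \<in> words k \<Longrightarrow> f u \<noteq> f v \<Longrightarrow> hdist u v \<le> 2 * tf \<Longrightarrow>
                    col u \<noteq> col v"
  shows "r_f k f td tf \<le> n - k + N_code TYPE('a) lam (2 * (tf - td))"
proof -
  obtain P :: "nat \<Rightarrow> nat \<Rightarrow> 'a" where P: "\<forall>u \<in> words k. \<forall>v \<in> words k. u \<noteq> v \<longrightarrow>
      2 * td + 1 \<le> hdist (sys_lin_enc n k P u) (sys_lin_enc n k P v)"
    using systematic unfolding exists_systematic_linear_code_def by blast
  define q where "q u = map (\<lambda>j. \<Sum>i<k. u ! i * P i j) [0..<n - k]" for u
  have enc: "sys_lin_enc n k P u = u @ q u" for u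
    by (simp add: sys_lin_enc_def q_def)
  obtain cw :: "nat \<Rightarrow> 'a list" where cw: "\<forall>i<lam. length (cw i) = N_code TYPE('a) lam (2 * (tf - td)) \<and>
      (\<forall>j<lam. i \<noteq> j \<longrightarrow> 2 * (tf - td) \<le> hdist (cw i) (cw j))"
    using N_code_codebook by blast
  have "is_FCC k f td tf (n - k + N_code TYPE('a) lam (2 * (tf - td))) (\<lambda>u. q u @ cw (col u))"
  proof (rule is_FCC_append_separating_suffix[OF \<open>td \<le> tf\<close>])
    show "2 * td + 1 \<le> hdist (u @ q u) (v @ q v)" if "u \<in> words k" "v \<in> words k" "u \<noteq> v" for u v
      using P that by (simp add: enc)
    show "2 * (tf - td) \<le> hdist (cw (col u)) (cw (col v))"
      if "u \<in> words k" "v \<in> words k" "f u \<noteq> f v" "hdist u v \<le> 2 * tf" for u v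
      using cw col_lt col_sep that by blast
  qed (use cw col_lt in \<open>simp_all add: q_def\<close>)
  then show ?thesis
    by (rule r_f_le)
qed

theorem theorem10:
  fixes f :: "'a::{finite,field} list \<Rightarrow> 'b"
    and k n td tf lam :: nat
  assumes "td \<le> tf"
    and "locally_bounded k f (2 * tf) lam"
    and "balls_are_intervals k f (2 * tf)"
    and "exists_systematic_linear_code TYPE('a) n k (2 * td + 1)"
  shows "r_f k f td tf \<le> n - k + N_code TYPE('a) lam (2 * (tf - td)) \<and>
         (card (UNIV :: 'a set) = 2 \<and> lam = 4 \<longrightarrow> r_f k f td tf \<le> n - k + 3 * (tf - td))"
proof -
  obtain col where col: "\<forall>u \<in> words k. col u < lam \<and>
      (\<forall>v \<in> words k. f u \<noteq> f v \<and> hdist u v \<le> 2 * tf \<longrightarrow> col u \<noteq> col v)"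
    using coloring_of_interval_balls[OF assms(2,3)] by blast
  have bound: "r_f k f td tf \<le> n - k + N_code TYPE('a) lam (2 * (tf - td))"
    using col by (intro r_f_le_of_coloring[OF assms(1,4)]) blast+
  have "N_code TYPE('a) 4 (2 * (tf - td)) \<le> 3 * (tf - td)"
    by (rule N_code_four_le)
  with bound show ?thesis
    by auto
qed

end
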